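(* Let $\ell<t$ be positive integers and $n\ge 2t+2$. Then $\lambda(C_{2t+1}(T_{n-2t,2}))<\lambda(C_{2\ell+1}(T_{n-2\ell,2}))$.
   Context: $\lambda(G)$ denotes the spectral radius of the adjacency matrix of $G$. $T_{m,2}$ is the complete bipartite graph on $m$ vertices with parts of sizes $\lfloor m/2\rfloor$ and $\lceil m/2\rceil$. For $s\ge1$, $C_{2s+1}(T_{n-2s,2})$ is the $n$-vertex graph obtained by identifying one vertex of a cycle $C_{2s+1}$ with one vertex of $T_{n-2s,2}$ lying in the part of size $\lfloor (n-2s)/2\rfloor$. *)

theory Defs
  imports "Jordan_Normal_Form.Spectral_Radius"
begin

text \<open>Vertices of all graphs are 0,...,n-1. The graph C_{2s+1}(T_{n-2s,2}):
  with m = n - 2s and a = m div 2 (= floor(m/2)), vertices 0..a-1 form the part of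
  size floor(m/2) of the balanced complete bipartite graph T_{m,2}, vertices a..m-1 the
  part of size ceil(m/2). The cycle C_{2s+1} consists of vertex 0 (the identified
  vertex, in the smaller part) and the new vertices m, m+1, ..., m+2s-1.\<close>

definition cyc_vertex :: "nat \<Rightarrow> nat \<Rightarrow> nat" where
  "cyc_vertex m k = (if k = 0 then 0 else m + k - 1)"

definition cycle_turan_adj :: "nat \<Rightarrow> nat \<Rightarrow> nat \<Rightarrow> nat \<Rightarrow> bool" where
  "cycle_turan_adj n s i j =
     (let m = n - 2 * s; a = m div 2 in
        (i < a \<and> a \<le> j \<and> j < m) \<or> (j < a \<and> a \<le> i \<and> i < m) \<or>
        (\<exists>k < 2 * s + 1.
            (i = cyc_vertex m k \<and> j = cyc_vertex m ((k + 1) mod (2 * s + 1))) \<or>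
            (j = cyc_vertex m k \<and> i = cyc_vertex m ((k + 1) mod (2 * s + 1)))))"

definition adj_matrix :: "nat \<Rightarrow> (nat \<Rightarrow> nat \<Rightarrow> bool) \<Rightarrow> complex mat" where
  "adj_matrix n E = mat n n (\<lambda>(i, j). if E i j then 1 else 0)"

definition lambda_cycle_turan :: "nat \<Rightarrow> nat \<Rightarrow> real" where
  "lambda_cycle_turan n s = spectral_radius (adj_matrix n (cycle_turan_adj n s))"

end

theory Submission
  imports Defs "HOL-Library.Complex_Order"
begin

text \<open>Both spectral radii are compared with explicit thresholds through Collatz--Wielandt
  bounds: a positive vector x with A x < U x entrywise forces \<lambda>(A) < U, and a nonnegative
  vector y \<noteq> 0 with A y \<ge> L y forces \<lambda>(A) \<ge> L. Write m = n - 2t \<ge> 2 for the order of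
  the Turan part of the graph for t; the graph for l has a Turan part of order at least
  m + 2. For m \<ge> 4 a weighting of C_{2t+1}(T_{m,2}) gives \<lambda> < \<lfloor>m/2\<rfloor> + 1, while the larger
  Turan part contains K_{\<lfloor>m/2\<rfloor>+1,\<lfloor>m/2\<rfloor>+1}. For m = 2 and m = 3 the thresholds 11/5 and 12/5
  separate the two graphs.\<close>

definition neighbours :: "nat \<Rightarrow> (nat \<Rightarrow> nat \<Rightarrow> bool) \<Rightarrow> nat \<Rightarrow> nat set" where
  "neighbours n E i = {j. j < n \<and> E i j}"

lemma finite_neighbours [simp]: "finite (neighbours n E i)"
  unfolding neighbours_def by simp

lemma adj_matrix_carrier [simp]: "adj_matrix n E \<in> carrier_mat n n"
  unfolding adj_matrix_def by simp

lemma dim_adj_matrix [simp]: "dim_row (adj_matrix n E) = n" "dim_col (adj_matrix n E) = n"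
  unfolding adj_matrix_def by simp_all

lemma adj_matrix_mult_vec_nth:
  assumes "v \<in> carrier_vec n" and "i < n"
  shows "(adj_matrix n E *\<^sub>v v) $ i = (\<Sum>j\<in>neighbours n E i. v $ j)"
proof -
  have "(adj_matrix n E *\<^sub>v v) $ i = (\<Sum>j\<in>{0..<n}. if E i j then v $ j else 0)"
    using assms unfolding adj_matrix_def by (auto simp: scalar_prod_def intro: sum.cong)
  also have "\<dots> = (\<Sum>j\<in>neighbours n E i. v $ j)"
    unfolding neighbours_def by (simp add: sum.inter_filter[symmetric] conj_commute)
  finally show ?thesis .
qed

lemma spectral_radius_adj_matrix_less:
  fixes x :: "nat \<Rightarrow> real"
  assumes "0 < n" and pos: "\<And>i. i < n \<Longrightarrow> 0 < x i"
    and sub: "\<And>i. i < n \<Longrightarrow> (\<Sum>j\<in>neighbours n E i. x j) < U * x i"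
  shows "spectral_radius (adj_matrix n E) < U"
proof -
  let ?A = "adj_matrix n E"
  obtain \<mu> where "\<mu> \<in> spectrum ?A" and sr: "spectral_radius ?A = norm \<mu>"
    using spectral_radius_mem_max(1)[OF adj_matrix_carrier \<open>0 < n\<close>] by blast
  then obtain v where v: "v \<in> carrier_vec n" "v \<noteq> 0\<^sub>v n" and Av: "?A *\<^sub>v v = \<mu> \<cdot>\<^sub>v v"
    unfolding spectrum_def eigenvalue_def eigenvector_def by auto
  define f where "f i = norm (v $ i) / x i" for i
  obtain i0 where i0: "i0 < n" and max: "\<And>i. i < n \<Longrightarrow> f i \<le> f i0"
    using Max_in[of "f ` {..<n}"] Max_ge[of "f ` {..<n}"] \<open>0 < n\<close> by fastforce
  obtain j0 where "j0 < n" "v $ j0 \<noteq> 0"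
    using v by (metis carrier_vecD eq_vecI index_zero_vec)
  then have "0 < f i0"
    using max[of j0] pos unfolding f_def
    by (meson divide_pos_pos less_le_trans zero_less_norm_iff)
  have dominated: "norm (v $ j) \<le> f i0 * x j" if "j < n" for j
    using max[OF that] pos[OF that] unfolding f_def by (simp add: field_simps)
  have "norm \<mu> * norm (v $ i0) = norm (\<Sum>j\<in>neighbours n E i0. v $ j)"
    using Av adj_matrix_mult_vec_nth[OF v(1) i0] i0 v(1)
    by (metis index_smult_vec(1) carrier_vecD norm_mult)
  also have "\<dots> \<le> (\<Sum>j\<in>neighbours n E i0. f i0 * x j)"
    using dominated by (intro order_trans[OF norm_sum] sum_mono) (auto simp: neighbours_def)
  also have "\<dots> < f i0 * (U * x i0)"
    using sub[OF i0] \<open>0 < f i0\<close> by (simp add: sum_distrib_left[symmetric])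
  also have "\<dots> = U * norm (v $ i0)"
    using pos[OF i0] unfolding f_def by simp
  finally show ?thesis
    using sr by (metis mult_less_cancel_right norm_ge_zero)
qed

lemma pow_mat_Suc_left:
  assumes "A \<in> carrier_mat n n"
  shows "A ^\<^sub>m Suc k = A * A ^\<^sub>m k"
proof (induction k)
  case 0
  then show ?case using assms by simp
next
  case (Suc k)
  then have "A ^\<^sub>m Suc (Suc k) = (A * A ^\<^sub>m k) * A" by simp
  also have "\<dots> = A * A ^\<^sub>m Suc k"
    using assms by (simp add: assoc_mult_mat[of _ n n _ n _ n])
  finally show ?case .
qed

lemma pow_mat_smult:
  fixes c :: "'a :: comm_semiring_1"
  assumes "A \<in> carrier_mat n n"
  shows "(c \<cdot>\<^sub>m A) ^\<^sub>m k = c ^ k \<cdot>\<^sub>m A ^\<^sub>m k"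
  by (induction k) (use assms in \<open>auto simp: ac_simps\<close>)

lemma spectral_radius_nonneg:
  assumes "A \<in> carrier_mat n n" and "0 < n"
  shows "0 \<le> spectral_radius A"
  using spectral_radius_mem_max(1)[OF assms] by auto

lemma spectral_radius_smult_le:
  assumes A: "A \<in> carrier_mat n n" and "0 < n" and "c \<noteq> 0"
  shows "spectral_radius (c \<cdot>\<^sub>m A) \<le> norm c * spectral_radius A"
proof -
  obtain \<mu> where "\<mu> \<in> spectrum (c \<cdot>\<^sub>m A)" and sr: "spectral_radius (c \<cdot>\<^sub>m A) = norm \<mu>"
    using spectral_radius_mem_max(1)[of "c \<cdot>\<^sub>m A" n] A \<open>0 < n\<close> by auto
  then obtain v where v: "v \<in> carrier_vec n" "v \<noteq> 0\<^sub>v n" and cAv: "c \<cdot>\<^sub>m A *\<^sub>v v = \<mu> \<cdot>\<^sub>v v"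
    using A unfolding spectrum_def eigenvalue_def eigenvector_def by auto
  have "A *\<^sub>v v = (\<mu> / c) \<cdot>\<^sub>v v"
  proof (rule eq_vecI)
    fix i assume "i < dim_vec ((\<mu> / c) \<cdot>\<^sub>v v)"
    then have i: "i < n" using v by simp
    have "c * (row A i \<bullet> v) = \<mu> * v $ i"
      using arg_cong[OF cAv, of "\<lambda>w. w $ i"] A v i by simp
    then show "(A *\<^sub>v v) $ i = ((\<mu> / c) \<cdot>\<^sub>v v) $ i"
      using A v i \<open>c \<noteq> 0\<close> by (simp add: field_simps)
  qed (use A v in simp)
  then have "\<mu> / c \<in> spectrum A"
    using A v unfolding spectrum_def eigenvalue_def eigenvector_def by auto
  then have "norm (\<mu> / c) \<le> spectral_radius A"
    using spectral_radius_mem_max(2)[OF A \<open>0 < n\<close>] by blast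
  then show ?thesis
    using sr \<open>c \<noteq> 0\<close> by (simp add: norm_divide field_simps)
qed

lemma pow_mult_vec_nth_bound:
  assumes A: "A \<in> carrier_mat n n" and "spectral_radius A < c"
    and "v \<in> carrier_vec n" and "i < n"
  shows "\<exists>C. \<forall>k. norm ((A ^\<^sub>m k *\<^sub>v v) $ i) \<le> C * c ^ k"
proof -
  have "0 < n" using \<open>i < n\<close> by simp
  have "0 < c"
    using spectral_radius_nonneg[OF A \<open>0 < n\<close>] \<open>spectral_radius A < c\<close> by linarith
  define B where "B = complex_of_real (1 / c) \<cdot>\<^sub>m A"
  have B: "B \<in> carrier_mat n n" unfolding B_def using A by simp
  have "spectral_radius B \<le> spectral_radius A / c"
    using spectral_radius_smult_le[OF A \<open>0 < n\<close>, of "complex_of_real (1 / c)"] \<open>0 < c\<close>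
    unfolding B_def by (simp add: norm_divide)
  also have "\<dots> < 1" using \<open>spectral_radius A < c\<close> \<open>0 < c\<close> by simp
  finally obtain C where C: "\<And>k. norm_bound (B ^\<^sub>m k) C"
    using spectral_radius_jnf_norm_bound_less_1_upper_triangular[OF B] by blast
  have "A = complex_of_real c \<cdot>\<^sub>m B"
    unfolding B_def using \<open>0 < c\<close> A by (intro eq_matI) (auto simp flip: of_real_mult)
  then have Ak: "A ^\<^sub>m k = complex_of_real c ^ k \<cdot>\<^sub>m B ^\<^sub>m k" for k
    using pow_mat_smult[OF B] by simp
  have "norm ((A ^\<^sub>m k *\<^sub>v v) $ i) \<le> (C * (\<Sum>j<n. norm (v $ j))) * c ^ k" for k
  proof -
    have "(A ^\<^sub>m k *\<^sub>v v) $ i = (\<Sum>j<n. complex_of_real c ^ k * ((B ^\<^sub>m k) $$ (i, j) * v $ j))"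
      using A B \<open>v \<in> carrier_vec n\<close> \<open>i < n\<close>
      by (simp add: Ak scalar_prod_def lessThan_atLeast0 mult.assoc)
    also have "\<dots> = complex_of_real c ^ k * (\<Sum>j<n. (B ^\<^sub>m k) $$ (i, j) * v $ j)"
      by (simp only: sum_distrib_left)
    finally have "norm ((A ^\<^sub>m k *\<^sub>v v) $ i) = c ^ k * norm (\<Sum>j<n. (B ^\<^sub>m k) $$ (i, j) * v $ j)"
      using \<open>0 < c\<close> by (simp add: norm_mult norm_power)
    also have "\<dots> \<le> c ^ k * (\<Sum>j<n. C * norm (v $ j))"
    proof (intro mult_left_mono order_trans[OF norm_sum] sum_mono)
      fix j assume "j \<in> {..<n}"
      then have "norm ((B ^\<^sub>m k) $$ (i, j)) \<le> C"
        using C[of k] B \<open>i < n\<close> unfolding norm_bound_def by auto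
      then show "norm ((B ^\<^sub>m k) $$ (i, j) * v $ j) \<le> C * norm (v $ j)"
        by (simp add: norm_mult mult_right_mono)
    qed (use \<open>0 < c\<close> in simp)
    finally show ?thesis by (simp add: sum_distrib_left ac_simps)
  qed
  then show ?thesis by blast
qed

text \<open>The order on complex numbers compares real parts and demands equal imaginary parts, so the
  conclusion also says that the entry on the right is real.\<close>

lemma adj_matrix_pow_mult_vec_ge:
  fixes y :: "nat \<Rightarrow> real"
  assumes nonneg: "\<And>i. i < n \<Longrightarrow> 0 \<le> y i" and "0 \<le> L"
    and super: "\<And>i. i < n \<Longrightarrow> L * y i \<le> (\<Sum>j\<in>neighbours n E i. y j)"
    and "i < n"
  shows "complex_of_real (L ^ k * y i)
    \<le> (adj_matrix n E ^\<^sub>m k *\<^sub>v vec n (\<lambda>j. complex_of_real (y j))) $ i"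
  using \<open>i < n\<close>
proof (induction k arbitrary: i)
  case 0
  then show ?case by simp
next
  case (Suc k)
  let ?A = "adj_matrix n E" and ?y = "vec n (\<lambda>j. complex_of_real (y j))"
  have "complex_of_real (L ^ Suc k * y i) \<le> complex_of_real (L ^ k * (\<Sum>j\<in>neighbours n E i. y j))"
    using mult_left_mono[OF super[OF Suc.prems] zero_le_power[OF \<open>0 \<le> L\<close>, of k]]
    by (simp add: less_eq_complex_def ac_simps)
  also have "\<dots> = (\<Sum>j\<in>neighbours n E i. complex_of_real (L ^ k * y j))"
    by (simp add: sum_distrib_left)
  also have "\<dots> \<le> (\<Sum>j\<in>neighbours n E i. (?A ^\<^sub>m k *\<^sub>v ?y) $ j)"
    by (intro sum_mono Suc.IH) (simp add: neighbours_def)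
  also have "\<dots> = (?A *\<^sub>v (?A ^\<^sub>m k *\<^sub>v ?y)) $ i"
    using adj_matrix_mult_vec_nth[OF mult_mat_vec_carrier[OF pow_carrier_mat vec_carrier] Suc.prems]
    by simp
  also have "\<dots> = (?A ^\<^sub>m Suc k *\<^sub>v ?y) $ i"
    unfolding pow_mat_Suc_left[OF adj_matrix_carrier]
    by (subst assoc_mult_mat_vec[of _ n n _ n]) auto
  finally show ?case .
qed

text \<open>If \<lambda>(A) < c < L, the entries of A^k y grow at most like c^k, but at least like L^k.\<close>

lemma spectral_radius_adj_matrix_ge:
  fixes y :: "nat \<Rightarrow> real"
  assumes nonneg: "\<And>i. i < n \<Longrightarrow> 0 \<le> y i" and "i0 < n" and "0 < y i0" and "0 < L"
    and super: "\<And>i. i < n \<Longrightarrow> L * y i \<le> (\<Sum>j\<in>neighbours n E i. y j)"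
  shows "L \<le> spectral_radius (adj_matrix n E)"
proof (rule ccontr)
  let ?A = "adj_matrix n E" and ?y = "vec n (\<lambda>j. complex_of_real (y j))"
  assume "\<not> L \<le> spectral_radius ?A"
  then obtain c where c: "spectral_radius ?A < c" "c < L"
    using dense[of "spectral_radius ?A" L] by (auto simp: not_le)
  then obtain C where C: "\<And>k. norm ((?A ^\<^sub>m k *\<^sub>v ?y) $ i0) \<le> C * c ^ k"
    using pow_mult_vec_nth_bound[OF adj_matrix_carrier c(1) vec_carrier \<open>i0 < n\<close>] by blast
  have "0 < c"
    using spectral_radius_nonneg[OF adj_matrix_carrier, of n E] \<open>i0 < n\<close> c by linarith
  have "L ^ k * y i0 \<le> C * c ^ k" for k
  proof -
    have "complex_of_real (L ^ k * y i0) \<le> (?A ^\<^sub>m k *\<^sub>v ?y) $ i0"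
      using adj_matrix_pow_mult_vec_ge[OF nonneg _ super \<open>i0 < n\<close>] \<open>0 < L\<close> by simp
    then have "L ^ k * y i0 \<le> norm ((?A ^\<^sub>m k *\<^sub>v ?y) $ i0)"
      unfolding less_eq_complex_def
      by (metis Re_complex_of_real Im_complex_of_real cmod_eq_Re abs_ge_self order_trans)
    then show ?thesis using C[of k] by (rule order_trans)
  qed
  then have "(L / c) ^ k \<le> C / y i0" for k
    using \<open>0 < c\<close> \<open>0 < y i0\<close> by (simp add: power_divide pos_le_divide_eq pos_divide_le_eq)
  moreover obtain k where "C / y i0 < (L / c) ^ k"
    using real_arch_pow[of "L / c"] c \<open>0 < c\<close> by auto
  ultimately show False by (meson not_le)
qed

lemma cyc_vertex_succ:
  assumes "k < 2 * s + 1"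
  shows "cyc_vertex m ((k + 1) mod (2 * s + 1)) = (if k = 2 * s then 0 else m + k)"
  using assms by (auto simp: cyc_vertex_def)

definition cycle_arc :: "nat \<Rightarrow> nat \<Rightarrow> nat \<Rightarrow> nat \<Rightarrow> bool" where
  "cycle_arc m s i j \<longleftrightarrow>
     (i = 0 \<and> j = m) \<or> (m \<le> i \<and> j = i + 1 \<and> j < m + 2 * s) \<or> (i = m + 2 * s - 1 \<and> j = 0)"

lemma ex_cycle_step_iff_cycle_arc:
  assumes "1 \<le> s" and "1 \<le> m"
  shows "(\<exists>k < 2 * s + 1. i = cyc_vertex m k \<and> j = cyc_vertex m ((k + 1) mod (2 * s + 1)))
    \<longleftrightarrow> cycle_arc m s i j"
proof
  assume "\<exists>k < 2 * s + 1. i = cyc_vertex m k \<and> j = cyc_vertex m ((k + 1) mod (2 * s + 1))"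
  then obtain k where k: "k < 2 * s + 1" and i: "i = cyc_vertex m k"
    and "j = cyc_vertex m ((k + 1) mod (2 * s + 1))"
    by blast
  then have "j = (if k = 2 * s then 0 else m + k)"
    using cyc_vertex_succ[OF k] by simp
  then show "cycle_arc m s i j"
    using k i assms by (cases "k = 0") (auto simp: cycle_arc_def cyc_vertex_def)
next
  assume "cycle_arc m s i j"
  then consider "i = 0" "j = m" | "m \<le> i" "j = i + 1" "j < m + 2 * s" | "i = m + 2 * s - 1" "j = 0"
    unfolding cycle_arc_def by blast
  then show "\<exists>k < 2 * s + 1. i = cyc_vertex m k \<and> j = cyc_vertex m ((k + 1) mod (2 * s + 1))"
  proof cases
    case 1
    then show ?thesis
      using assms by (intro exI[of _ 0]) (auto simp: cyc_vertex_def)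
  next
    case 2
    then show ?thesis
      using assms by (intro exI[of _ "i - m + 1"]) (auto simp: cyc_vertex_succ cyc_vertex_def)
  next
    case 3
    then show ?thesis
      using assms by (intro exI[of _ "2 * s"]) (auto simp: cyc_vertex_succ cyc_vertex_def)
  qed
qed

lemma cycle_turan_adj_iff:
  assumes "1 \<le> s" and "1 \<le> m"
  shows "cycle_turan_adj (m + 2 * s) s i j \<longleftrightarrow>
    (i < m div 2 \<and> m div 2 \<le> j \<and> j < m) \<or> (j < m div 2 \<and> m div 2 \<le> i \<and> i < m) \<or>
    cycle_arc m s i j \<or> cycle_arc m s j i"
  using ex_cycle_step_iff_cycle_arc[OF assms, of i j] ex_cycle_step_iff_cycle_arc[OF assms, of j i]
  unfolding cycle_turan_adj_def Let_def by auto

lemma sum_atLeastLessThan_eq_const: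
  fixes f :: "nat \<Rightarrow> real"
  assumes "\<And>i. a \<le> i \<Longrightarrow> i < b \<Longrightarrow> f i = c"
  shows "sum f {a..<b} = real (b - a) * c"
  using assms by (simp add: sum.cong[of _ _ f "\<lambda>_. c"])

lemma sum_lessThan_eq_first_plus_const:
  fixes f :: "nat \<Rightarrow> real"
  assumes "0 < a" and "\<And>i. 0 < i \<Longrightarrow> i < a \<Longrightarrow> f i = c"
  shows "sum f {0..<a} = f 0 + real (a - 1) * c"
proof -
  have "sum f {0..<a} = f 0 + sum f {1..<a}"
    using \<open>0 < a\<close> by (simp add: sum.atLeast_Suc_lessThan)
  also have "sum f {1..<a} = real (a - 1) * c"
    using assms(2) by (intro sum_atLeastLessThan_eq_const) auto
  finally show ?thesis .
qed

lemma sum_pair_le: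
  fixes f :: "nat \<Rightarrow> real"
  assumes "0 \<le> f i" and "0 \<le> f j"
  shows "sum f {i, j} \<le> f i + f j"
  using assms by (simp add: sum.insert_if)

context
  fixes m s :: nat
  assumes s: "1 \<le> s" and m: "2 \<le> m"
begin

lemma neighbours_cycle_turan_root:
  "neighbours (m + 2 * s) (cycle_turan_adj (m + 2 * s) s) 0 = {m div 2..<m} \<union> {m, m + 2 * s - 1}"
  using s m by (auto simp: neighbours_def cycle_turan_adj_iff cycle_arc_def)

lemma neighbours_cycle_turan_small_part:
  "0 < i \<Longrightarrow> i < m div 2 \<Longrightarrow>
    neighbours (m + 2 * s) (cycle_turan_adj (m + 2 * s) s) i = {m div 2..<m}"
  using s m by (auto simp: neighbours_def cycle_turan_adj_iff cycle_arc_def)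

lemma neighbours_cycle_turan_large_part:
  "m div 2 \<le> i \<Longrightarrow> i < m \<Longrightarrow>
    neighbours (m + 2 * s) (cycle_turan_adj (m + 2 * s) s) i = {0..<m div 2}"
  using s m by (auto simp: neighbours_def cycle_turan_adj_iff cycle_arc_def)

lemma neighbours_cycle_turan_cycle:
  "m \<le> i \<Longrightarrow> i < m + 2 * s \<Longrightarrow>
    neighbours (m + 2 * s) (cycle_turan_adj (m + 2 * s) s) i =
      {if i = m then 0 else i - 1, if i = m + 2 * s - 1 then 0 else i + 1}"
  using s m by (auto simp: neighbours_def cycle_turan_adj_iff cycle_arc_def)

lemma lambda_cycle_turan_less:
  fixes u0 u v w U :: real
  assumes "0 < u" "0 < v" "0 < w" "w \<le> u0"
    and at_root: "real (m - m div 2) * v + 2 * w < U * u0"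
    and at_small_part: "2 \<le> m div 2 \<Longrightarrow> real (m - m div 2) * v < U * u"
    and at_large_part: "u0 + real (m div 2 - 1) * u < U * v"
    and on_cycle: "u0 + w < U * w"
  shows "lambda_cycle_turan (m + 2 * s) s < U"
proof -
  let ?N = "neighbours (m + 2 * s) (cycle_turan_adj (m + 2 * s) s)"
  define x where "x i = (if i = 0 then u0 else if i < m div 2 then u else if i < m then v else w)" for i
  have pos: "0 < x i" for i
    using assms unfolding x_def by auto
  have sum_small: "sum x {0..<m div 2} = u0 + real (m div 2 - 1) * u"
    using m sum_lessThan_eq_first_plus_const[of "m div 2" x u] by (simp add: x_def)
  have sum_large: "sum x {m div 2..<m} = real (m - m div 2) * v"
    by (rule sum_atLeastLessThan_eq_const) (use m in \<open>auto simp: x_def\<close>)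
  have sub: "sum x (?N i) < U * x i" if "i < m + 2 * s" for i
  proof -
    consider "i = 0" | "0 < i" "i < m div 2" | "m div 2 \<le> i" "i < m" | "m \<le> i" "i < m + 2 * s"
      using \<open>i < m + 2 * s\<close> by linarith
    then show ?thesis
    proof cases
      case 1
      have "sum x (?N i) = sum x {m div 2..<m} + sum x {m, m + 2 * s - 1}"
        unfolding 1 neighbours_cycle_turan_root by (rule sum.union_disjoint) (use s in auto)
      also note sum_large
      also have "sum x {m, m + 2 * s - 1} = 2 * w"
        using s m by (auto simp: x_def)
      finally show ?thesis using 1 at_root by (simp add: x_def)
    next
      case 2
      then show ?thesis
        using at_small_part sum_large by (simp add: neighbours_cycle_turan_small_part x_def)
    next
      case 3
      then show ?thesis
        using at_large_part sum_small m by (auto simp: neighbours_cycle_turan_large_part x_def)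
    next
      case 4
      let ?p = "if i = m then 0 else i - 1" and ?q = "if i = m + 2 * s - 1 then 0 else i + 1"
      have "sum x (?N i) \<le> x ?p + x ?q"
        using 4 pos by (simp add: neighbours_cycle_turan_cycle sum_pair_le less_imp_le)
      also have "\<dots> \<le> u0 + w"
        using 4 s m \<open>w \<le> u0\<close> by (auto simp: x_def)
      finally show ?thesis using 4 on_cycle m by (simp add: x_def)
    qed
  qed
  show ?thesis
    unfolding lambda_cycle_turan_def
    by (rule spectral_radius_adj_matrix_less[OF _ pos sub]) (use m in auto)
qed

lemma lambda_cycle_turan_ge:
  fixes p0 p q r L :: real
  assumes "0 < p0" "0 \<le> p" "0 \<le> q" "0 \<le> r" "0 < L"
    and at_root: "L * p0 \<le> real (m - m div 2) * q + 2 * r"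
    and at_small_part: "2 \<le> m div 2 \<Longrightarrow> L * p \<le> real (m - m div 2) * q"
    and at_large_part: "L * q \<le> p0 + real (m div 2 - 1) * p"
    and next_to_root: "L * r \<le> p0"
  shows "L \<le> lambda_cycle_turan (m + 2 * s) s"
proof -
  let ?N = "neighbours (m + 2 * s) (cycle_turan_adj (m + 2 * s) s)"
  define y where "y i = (if i = 0 then p0 else if i < m div 2 then p else if i < m then q
    else if i = m \<or> i = m + 2 * s - 1 then r else 0)" for i
  have nonneg: "0 \<le> y i" for i
    using assms unfolding y_def by auto
  have sum_small: "sum y {0..<m div 2} = p0 + real (m div 2 - 1) * p"
    using m sum_lessThan_eq_first_plus_const[of "m div 2" y p] by (simp add: y_def)
  have sum_large: "sum y {m div 2..<m} = real (m - m div 2) * q"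
    by (rule sum_atLeastLessThan_eq_const) (use m in \<open>auto simp: y_def\<close>)
  have super: "L * y i \<le> sum y (?N i)" if "i < m + 2 * s" for i
  proof -
    consider "i = 0" | "0 < i" "i < m div 2" | "m div 2 \<le> i" "i < m" | "m \<le> i" "i < m + 2 * s"
      using \<open>i < m + 2 * s\<close> by linarith
    then show ?thesis
    proof cases
      case 1
      have "sum y (?N i) = sum y {m div 2..<m} + sum y {m, m + 2 * s - 1}"
        unfolding 1 neighbours_cycle_turan_root by (rule sum.union_disjoint) (use s in auto)
      also note sum_large
      also have "sum y {m, m + 2 * s - 1} = 2 * r"
        using s m by (auto simp: y_def)
      finally show ?thesis using 1 at_root by (simp add: y_def)
    next
      case 2
      then show ?thesis
        using at_small_part sum_large by (simp add: neighbours_cycle_turan_small_part y_def)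
    next
      case 3
      then show ?thesis
        using at_large_part sum_small m by (auto simp: neighbours_cycle_turan_large_part y_def)
    next
      case 4
      show ?thesis
      proof (cases "i = m \<or> i = m + 2 * s - 1")
        case True
        then have "0 \<in> ?N i"
          using 4 by (auto simp: neighbours_cycle_turan_cycle)
        then have "y 0 \<le> sum y (?N i)"
          using nonneg by (intro member_le_sum) auto
        then show ?thesis
          using True 4 s next_to_root m by (auto simp: y_def)
      next
        case False
        with 4 have "y i = 0"
          by (simp add: y_def)
        then show ?thesis
          using nonneg by (simp add: sum_nonneg)
      qed
    qed
  qed
  have "0 < y 0"
    using \<open>0 < p0\<close> by (simp add: y_def)
  show ?thesis
    unfolding lambda_cycle_turan_def
    by (rule spectral_radius_adj_matrix_ge[OF nonneg _ \<open>0 < y 0\<close> \<open>0 < L\<close> super]) (use m in auto)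
qed

end

lemma lambda_cycle_turan_less_half_plus_one:
  assumes "1 \<le> s" and "4 \<le> m"
  shows "lambda_cycle_turan (m + 2 * s) s < real (m div 2) + 1"
proof -
  define A where "A = real (m div 2)"
  define v where "v = (4 * A + 3) / (4 * A + 4)"
  define w where "w = 3 / (2 * A) + 1 / 16"
  have "2 \<le> A" and large: "real (m - m div 2) \<le> A + 1" and small: "real (m div 2 - 1) = A - 1"
    using \<open>4 \<le> m\<close> unfolding A_def by auto
  have v: "(A + 1) * v = A + 3 / 4" "0 < v"
    using \<open>2 \<le> A\<close> unfolding v_def by (auto simp: field_simps)
  have w: "A * w = 3 / 2 + A / 16" "0 < w" "2 * w \<le> 13 / 8"
    using \<open>2 \<le> A\<close> unfolding w_def by (auto simp: field_simps)
  have "real (m - m div 2) * v \<le> A + 3 / 4"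
    using mult_right_mono[OF large, of v] v by simp
  then show ?thesis
    unfolding A_def[symmetric]
    using \<open>2 \<le> A\<close> v w small
    by (intro lambda_cycle_turan_less[OF \<open>1 \<le> s\<close>, of m 1 v w "3 / 2"]) (auto simp: algebra_simps)
qed

lemma lambda_cycle_turan_ge_half:
  assumes "1 \<le> s" and "2 \<le> m"
  shows "real (m div 2) \<le> lambda_cycle_turan (m + 2 * s) s"
  using assms by (intro lambda_cycle_turan_ge[of s m 1 1 1 0]) auto

lemma lambda_cycle_turan_2_less:
  assumes "1 \<le> s"
  shows "lambda_cycle_turan (2 + 2 * s) s < 11 / 5"
  using assms by (intro lambda_cycle_turan_less[of s 2 1 "46 / 100" "84 / 100" 1]) auto

lemma lambda_cycle_turan_3_less:
  assumes "1 \<le> s"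
  shows "lambda_cycle_turan (3 + 2 * s) s < 12 / 5"
  using assms by (intro lambda_cycle_turan_less[of s 3 1 "43 / 100" "73 / 100" 1]) auto

lemma lambda_cycle_turan_ge_11_div_5:
  assumes "1 \<le> s" and "4 \<le> m"
  shows "11 / 5 \<le> lambda_cycle_turan (m + 2 * s) s"
proof -
  have "m div 2 + 2 \<le> m" "2 \<le> m div 2"
    using \<open>4 \<le> m\<close> by linarith+
  then have "real (m div 2) + 2 \<le> real m" "2 \<le> real (m div 2)"
    by linarith+
  then show ?thesis
    using assms by (intro lambda_cycle_turan_ge[of s m 1 "1 / 2" "13 / 20" "9 / 20"])
      (auto simp: field_simps)
qed

lemma lambda_cycle_turan_ge_12_div_5:
  assumes "1 \<le> s" and "5 \<le> m"
  shows "12 / 5 \<le> lambda_cycle_turan (m + 2 * s) s"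
proof -
  have "m div 2 + 3 \<le> m" "2 \<le> m div 2"
    using \<open>5 \<le> m\<close> by linarith+
  then have "real (m div 2) + 3 \<le> real m" "2 \<le> real (m div 2)"
    by linarith+
  then show ?thesis
    using assms by (intro lambda_cycle_turan_ge[of s m 6 6 5 0]) (auto simp: field_simps)
qed

theorem lemma3p5:
  fixes l t n :: nat
  assumes "0 < l" and "l < t" and "n \<ge> 2 * t + 2"
  shows "lambda_cycle_turan n t < lambda_cycle_turan n l"
proof -
  define m where "m = n - 2 * t"
  define m' where "m' = n - 2 * l"
  have n: "n = m + 2 * t" "n = m' + 2 * l" and "2 \<le> m" and "m + 2 \<le> m'"
    using assms unfolding m_def m'_def by auto
  have "1 \<le> t" "1 \<le> l"
    using assms by auto
  consider "m = 2" | "m = 3" | "4 \<le> m"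
    using \<open>2 \<le> m\<close> by linarith
  then show ?thesis
  proof cases
    case 1
    then have "lambda_cycle_turan n t < 11 / 5"
      using lambda_cycle_turan_2_less[OF \<open>1 \<le> t\<close>] n by simp
    moreover have "11 / 5 \<le> lambda_cycle_turan n l"
      using lambda_cycle_turan_ge_11_div_5[OF \<open>1 \<le> l\<close>, of m'] 1 \<open>m + 2 \<le> m'\<close> n by simp
    ultimately show ?thesis by linarith
  next
    case 2
    then have "lambda_cycle_turan n t < 12 / 5"
      using lambda_cycle_turan_3_less[OF \<open>1 \<le> t\<close>] n by simp
    moreover have "12 / 5 \<le> lambda_cycle_turan n l"
      using lambda_cycle_turan_ge_12_div_5[OF \<open>1 \<le> l\<close>, of m'] 2 \<open>m + 2 \<le> m'\<close> n by simp
    ultimately show ?thesis by linarith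
  next
    case 3
    have "lambda_cycle_turan n t < real (m div 2) + 1"
      using lambda_cycle_turan_less_half_plus_one[OF \<open>1 \<le> t\<close> 3] n by simp
    also have "\<dots> \<le> real (m' div 2)"
    proof -
      have "m div 2 + 1 \<le> m' div 2"
        using \<open>m + 2 \<le> m'\<close> by linarith
      then show ?thesis by linarith
    qed
    also have "\<dots> \<le> lambda_cycle_turan n l"
      using lambda_cycle_turan_ge_half[OF \<open>1 \<le> l\<close>, of m'] 3 \<open>m + 2 \<le> m'\<close> n by simp
    finally show ?thesis .
  qed
qed

end
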